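(* Let $n\ge 3$ and let $K$ be a proper $4$-coloring of $H_2(n,n-1)$. (1) If $T(K)=\{(x,y): x+y\in\{f_i,f_j\}\}$ for some $1\le i<j\le n$, then $K$ is the $(i,j)$-coordinate coloring (up to renaming of colors), i.e. its color classes are the four sets $\{x\in\mathbb{Z}_2^n: (x_i,x_j)=(a,b)\}$, $a,b\in\mathbb{Z}_2$. (2) If $T(K)=\{(x,y): x+y\in\{\mathbb{1},f_j\}\}$ for some $j\in\{1,\dots,n\}$, then $n$ is even and the color classes of $K$ are the four sets $\mathcal{A}^{\nu}_{\mu}=\{v\in\mathbb{Z}_2^n: \mathrm{wt}(v)\equiv \nu \pmod 2,\ v_j=\mu\}$, $\nu,\mu\in\{0,1\}$. As a consequence, every proper $4$-coloring $K$ of $H_2(n,n-1)$ with $\mathrm{rb}(K)=\frac{2}{n+1}$ is even.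
   Context: $H_2(n,n-1)$ is the simple undirected graph with vertex set $\mathbb{Z}_2^n$ in which $x,y$ are adjacent iff their Hamming distance is at least $n-1$; $\mathrm{wt}$ is Hamming weight. $e_k$ is the $k$-th standard basis vector, $\mathbb{1}$ the all-ones vector, $f_k=e_k+\mathbb{1}$. For a proper $k$-coloring $K$ of a simple graph $G=(V,E)$, an edge $(x,y)$ is a transition edge if swapping the colors of $x$ and $y$ (all other colors unchanged) yields again a proper $k$-coloring; $T(K)$ is the set of transition edges and $\mathrm{rb}(K)=|T(K)|/|E|$. A coloring is even if all color classes have the same cardinality. *)

theory Defs
  imports Complex_Main
begin

text \<open>Vectors of Z_2^n are encoded as subsets of {..<n} (support sets);
  coordinates are indexed 0..n-1. Addition is symmetric difference,
  Hamming weight is cardinality.\<close>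

definition Vn :: "nat \<Rightarrow> nat set set" where
  "Vn n = Pow {..<n}"

definition vadd :: "nat set \<Rightarrow> nat set \<Rightarrow> nat set" where
  "vadd x y = (x - y) \<union> (y - x)"

definition wt :: "nat set \<Rightarrow> nat" where
  "wt x = card x"

definition hdist :: "nat set \<Rightarrow> nat set \<Rightarrow> nat" where
  "hdist x y = wt (vadd x y)"

definition ones :: "nat \<Rightarrow> nat set" where
  "ones n = {..<n}"

definition evec :: "nat \<Rightarrow> nat set" where
  "evec k = {k}"

definition fvec :: "nat \<Rightarrow> nat \<Rightarrow> nat set" where
  "fvec n k = vadd (evec k) (ones n)"

text \<open>Edges of H_2(n,n-1), as ordered pairs (both orientations).\<close>
definition edges :: "nat \<Rightarrow> (nat set \<times> nat set) set" where
  "edges n = {(x, y). x \<in> Vn n \<and> y \<in> Vn n \<and> x \<noteq> y \<and> hdist x y \<ge> n - 1}"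

definition proper_coloring :: "nat \<Rightarrow> nat \<Rightarrow> (nat set \<Rightarrow> nat) \<Rightarrow> bool" where
  "proper_coloring n k K \<longleftrightarrow>
     (\<forall>x\<in>Vn n. K x < k) \<and> (\<forall>(x, y)\<in>edges n. K x \<noteq> K y)"

definition swap_col :: "(nat set \<Rightarrow> nat) \<Rightarrow> nat set \<Rightarrow> nat set \<Rightarrow> (nat set \<Rightarrow> nat)" where
  "swap_col K x y = K(x := K y, y := K x)"

definition transition_edges :: "nat \<Rightarrow> nat \<Rightarrow> (nat set \<Rightarrow> nat) \<Rightarrow> (nat set \<times> nat set) set" where
  "transition_edges n k K = {(x, y) \<in> edges n. proper_coloring n k (swap_col K x y)}"

definition rb :: "nat \<Rightarrow> nat \<Rightarrow> (nat set \<Rightarrow> nat) \<Rightarrow> real" where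
  "rb n k K = real (card (transition_edges n k K)) / real (card (edges n))"

definition color_class :: "nat \<Rightarrow> (nat set \<Rightarrow> nat) \<Rightarrow> nat \<Rightarrow> nat set set" where
  "color_class n K c = {x \<in> Vn n. K x = c}"

definition color_classes :: "nat \<Rightarrow> nat \<Rightarrow> (nat set \<Rightarrow> nat) \<Rightarrow> nat set set set" where
  "color_classes n k K = {color_class n K c | c. c < k}"

definition even_coloring :: "nat \<Rightarrow> nat \<Rightarrow> (nat set \<Rightarrow> nat) \<Rightarrow> bool" where
  "even_coloring n k K \<longleftrightarrow>
     (\<forall>c<k. \<forall>d<k. card (color_class n K c) = card (color_class n K d))"

end

theory Submission
  imports Defs
begin

text \<open>
  H_2(n,n-1) is the Cayley graph of Z_2^n whose generators are 1 and the f_k, i.e. the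
  vectors of weight at least n-1. An edge (x, y) is a transition edge iff no other neighbor
  of x has the color of y and no other neighbor of y has the color of x. With four colors
  this allows at most two transition neighbors per vertex, and if x has two, in directions s
  and t, then all other neighbors of x share the fourth color. Comparing the neighborhoods of
  x, x + s and x + u shows that x + u again has transitions exactly in directions s and t, so
  by connectivity the directions are the same everywhere. Then K (y + p) = K (y + q) for all
  other generators p, q, so K is invariant under the group W spanned by the sums p + q, and
  K x = K y iff x + y \<in> W. For {s, t} = {f_i, f_j} the group W consists of the vectors
  vanishing at i and j; for {s, t} = {1, f_j} it consists of the even vectors vanishing at j,
  and n must be even since otherwise the neighbor f_j of 0 lies in W. The color classes are
  the cosets of W, hence of equal size. Finally rb = 2/(n+1) says that on average a vertex has
  two transition neighbors, so every vertex has exactly two.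
\<close>

section \<open>Vectors of Z_2^n\<close>

lemma vadd_comm: "vadd x y = vadd y x"
  by (auto simp: vadd_def)

lemma vadd_assoc: "vadd (vadd x y) z = vadd x (vadd y z)"
  by (auto simp: vadd_def)

lemma vadd_left_cancel [simp]: "vadd x (vadd x y) = y"
  by (auto simp: vadd_def)

lemma vadd_right_cancel [simp]: "vadd (vadd x y) y = x"
  by (auto simp: vadd_def)

lemma vadd_empty [simp]: "vadd x {} = x" "vadd {} x = x"
  by (auto simp: vadd_def)

lemma vadd_self [simp]: "vadd x x = {}"
  by (auto simp: vadd_def)

lemma vadd_left_inj [simp]: "vadd x y = vadd x z \<longleftrightarrow> y = z"
  by (metis vadd_left_cancel)

lemma vadd_eq_empty_iff [simp]: "vadd x y = {} \<longleftrightarrow> x = y"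
  by (auto simp: vadd_def)

lemma vadd_eq_self_iff [simp]: "vadd x y = x \<longleftrightarrow> y = {}"
  by (metis vadd_empty(1) vadd_left_inj)

lemma vadd_right_commute: "vadd (vadd x a) b = vadd (vadd x b) a"
  by (auto simp: vadd_def)

lemma vadd_vadd_cancel_common: "vadd (vadd x v) (vadd y v) = vadd x y"
  by (auto simp: vadd_def)

lemma mem_vadd: "k \<in> vadd x y \<longleftrightarrow> (k \<in> x \<longleftrightarrow> k \<notin> y)"
  by (auto simp: vadd_def)

lemma vadd_insert: "k \<notin> B \<Longrightarrow> vadd x (insert k B) = vadd (vadd x {k}) B"
  by (auto simp: vadd_def)

lemma singleton_Vn: "k < n \<Longrightarrow> {k} \<in> Vn n"
  by (simp add: Vn_def)

lemma vadd_Vn: "x \<in> Vn n \<Longrightarrow> y \<in> Vn n \<Longrightarrow> vadd x y \<in> Vn n"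
  by (auto simp: vadd_def Vn_def)

lemma finite_Vn: "finite (Vn n)"
  by (simp add: Vn_def)

lemma finite_if_mem_Vn: "x \<in> Vn n \<Longrightarrow> finite x"
  by (auto simp: Vn_def intro: finite_subset)

lemma card_Vn: "card (Vn n) = 2 ^ n"
  by (simp add: Vn_def card_Pow)

lemma card_vadd:
  assumes "finite x" "finite y"
  shows "card (vadd x y) + 2 * card (x \<inter> y) = card x + card y"
proof -
  have "card x = card (x - y) + card (x \<inter> y)" "card y = card (y - x) + card (y \<inter> x)"
    using assms by (metis Int_Diff_disjoint Un_Diff_Int card_Un_disjoint finite_Diff finite_Int inf_commute)+
  moreover have "card (vadd x y) = card (x - y) + card (y - x)"
    unfolding vadd_def using assms by (intro card_Un_disjoint) auto
  ultimately show ?thesis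
    by (simp add: Int_commute)
qed

lemma even_card_vadd:
  "finite x \<Longrightarrow> finite y \<Longrightarrow> even (card (vadd x y)) \<longleftrightarrow> (even (card x) \<longleftrightarrow> even (card y))"
  using card_vadd[of x y] by (metis even_add even_mult_iff even_numeral)

lemma fvec_eq: "k < n \<Longrightarrow> fvec n k = {..<n} - {k}"
  by (auto simp: fvec_def vadd_def evec_def ones_def)

lemma vadd_ones_fvec: "k < n \<Longrightarrow> vadd (ones n) (fvec n k) = {k}"
  by (auto simp: fvec_eq ones_def vadd_def)

lemma ones_ne_fvec: "k < n \<Longrightarrow> ones n \<noteq> fvec n k"
  by (auto simp: fvec_eq ones_def)

lemma fvec_inj: "k < n \<Longrightarrow> l < n \<Longrightarrow> fvec n k = fvec n l \<longleftrightarrow> k = l"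
  by (auto simp: fvec_eq)

section \<open>H_2(n,n-1) as a Cayley graph\<close>

definition gens :: "nat \<Rightarrow> nat set set" where
  "gens n = insert (ones n) (fvec n ` {..<n})"

lemma ones_in_gens: "ones n \<in> gens n"
  by (simp add: gens_def)

lemma fvec_in_gens: "k < n \<Longrightarrow> fvec n k \<in> gens n"
  by (simp add: gens_def)

lemma gens_subset_Vn: "gens n \<subseteq> Vn n"
  by (auto simp: gens_def Vn_def ones_def fvec_eq)

lemma vadd_gens_Vn: "x \<in> Vn n \<Longrightarrow> s \<in> gens n \<Longrightarrow> vadd x s \<in> Vn n"
  using vadd_Vn gens_subset_Vn by blast

lemma card_gens: "card (gens n) = n + 1"
proof -
  have "inj_on (fvec n) {..<n}"
    by (auto simp: inj_on_def fvec_inj)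
  moreover have "ones n \<notin> fvec n ` {..<n}"
    using ones_ne_fvec by auto
  ultimately show ?thesis
    by (simp add: gens_def card_image)
qed

lemma exists_gens_notin:
  assumes "finite F" "card F \<le> n"
  obtains p where "p \<in> gens n" "p \<notin> F"
proof -
  have "\<not> gens n \<subseteq> F"
  proof
    assume "gens n \<subseteq> F"
    then have "card (gens n) \<le> card F"
      by (rule card_mono[OF assms(1)])
    then show False
      using assms(2) by (simp add: card_gens)
  qed
  then show ?thesis
    using that by blast
qed

lemma mem_gens_iff_card:
  assumes "v \<subseteq> {..<n}"
  shows "v \<in> gens n \<longleftrightarrow> n - 1 \<le> card v"
proof
  assume "v \<in> gens n"
  then show "n - 1 \<le> card v"
    by (auto simp: gens_def ones_def fvec_eq)
next
  assume card: "n - 1 \<le> card v"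
  show "v \<in> gens n"
  proof (cases "v = {..<n}")
    case True
    then show ?thesis by (simp add: gens_def ones_def)
  next
    case False
    then obtain k where k: "k < n" "k \<notin> v"
      using assms by blast
    then have "v = {..<n} - {k}"
      using assms card by (intro card_seteq) auto
    then show ?thesis
      using k by (simp add: gens_def fvec_eq)
  qed
qed

lemma edges_iff:
  assumes "2 \<le> n"
  shows "(x, y) \<in> edges n \<longleftrightarrow> x \<in> Vn n \<and> y \<in> Vn n \<and> vadd x y \<in> gens n"
proof -
  have "x \<noteq> y" if "n - 1 \<le> card (vadd x y)"
    using that assms by auto
  then show ?thesis
    using mem_gens_iff_card vadd_Vn
    by (auto simp: edges_def hdist_def wt_def Vn_def)
qed

lemma edge_vadd_gens: "2 \<le> n \<Longrightarrow> x \<in> Vn n \<Longrightarrow> s \<in> gens n \<Longrightarrow> (x, vadd x s) \<in> edges n"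
  by (simp add: edges_iff vadd_gens_Vn)

lemma edges_sym: "(x, y) \<in> edges n \<Longrightarrow> (y, x) \<in> edges n"
  by (auto simp: edges_def hdist_def vadd_comm)

lemma card_edges:
  assumes "2 \<le> n"
  shows "card (edges n) = 2 ^ n * (n + 1)"
proof -
  have "edges n = Sigma (Vn n) (\<lambda>x. vadd x ` gens n)"
    using assms by (auto simp: edges_iff vadd_gens_Vn intro: rev_image_eqI[of "vadd _ _"])
  moreover have "card (vadd x ` gens n) = n + 1" for x
    by (simp add: card_image inj_on_def card_gens)
  ultimately show ?thesis
    by (simp add: card_SigmaI finite_Vn gens_def card_Vn)
qed

lemma Vn_induct_gens:
  assumes start: "x0 \<in> Vn n" "P x0"
    and step: "\<And>x u. x \<in> Vn n \<Longrightarrow> P x \<Longrightarrow> u \<in> gens n \<Longrightarrow> P (vadd x u)"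
    and x: "x \<in> Vn n"
  shows "P x"
proof -
  have "P (vadd x0 B)" if "finite B" "B \<subseteq> {..<n}" for B
    using that
  proof (induction B rule: finite_induct)
    case empty
    then show ?case using start by simp
  next
    case (insert k B)
    then have k: "k < n" and B: "vadd x0 B \<in> Vn n" and PB: "P (vadd x0 B)"
      using start vadd_Vn[of x0 n B] by (auto simp: Vn_def)
    \<comment> \<open>the unit vector e_k is the sum of the generators 1 and f_k\<close>
    have "P (vadd (vadd (vadd x0 B) (ones n)) (fvec n k))"
      using step[OF vadd_gens_Vn[OF B ones_in_gens] step[OF B PB ones_in_gens] fvec_in_gens[OF k]] .
    moreover have "vadd (vadd (vadd x0 B) (ones n)) (fvec n k) = vadd (vadd x0 B) {k}"
      by (simp add: vadd_assoc vadd_ones_fvec[OF k])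
    moreover have "vadd x0 (insert k B) = vadd (vadd x0 B) {k}"
      using vadd_insert[OF insert.hyps(2)] vadd_right_commute by metis
    ultimately show ?case
      by simp
  qed
  moreover have "vadd x0 x \<subseteq> {..<n}"
    using vadd_Vn[OF start(1) x] by (simp add: Vn_def)
  ultimately have "P (vadd x0 (vadd x0 x))"
    using rev_finite_subset[OF finite_lessThan] by blast
  then show ?thesis
    by simp
qed

section \<open>Colorings constant on cosets\<close>

lemma vadd_subset_invariant:
  assumes single: "\<And>x k. x \<in> Vn n \<Longrightarrow> k \<in> A \<Longrightarrow> F (vadd x {k}) = F x"
    and "A \<subseteq> {..<n}" "B \<subseteq> A" and "x \<in> Vn n"
  shows "F (vadd x B) = F x"
proof -
  have "finite B"
    using assms(2,3) by (meson finite_lessThan rev_finite_subset subset_trans)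
  then show ?thesis
    using assms(3,4)
  proof (induction B arbitrary: x rule: finite_induct)
    case (insert k B)
    then have k: "k \<in> A" and "B \<subseteq> A"
      by simp_all
    have "k < n"
      using k assms(2) by auto
    then have "vadd x {k} \<in> Vn n"
      using insert.prems(2) by (simp add: vadd_Vn singleton_Vn)
    then have "F (vadd (vadd x {k}) B) = F (vadd x {k})"
      by (rule insert.IH[OF \<open>B \<subseteq> A\<close>])
    also have "\<dots> = F x"
      using single[OF insert.prems(2) k] .
    finally show ?case
      using vadd_insert[OF insert.hyps(2)] by simp
  qed simp
qed

lemma vadd_even_subset_invariant:
  assumes pair: "\<And>x k l. x \<in> Vn n \<Longrightarrow> k \<in> A \<Longrightarrow> l \<in> A \<Longrightarrow> F (vadd (vadd x {k}) {l}) = F x"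
    and A: "A \<subseteq> {..<n}" and B: "B \<subseteq> A" "even (card B)" and x: "x \<in> Vn n"
  shows "F (vadd x B) = F x"
proof (cases "B = {}")
  case False
  then obtain k0 where k0: "k0 \<in> A"
    using B by blast
  have single_Vn: "vadd x {k} \<in> Vn n" if "x \<in> Vn n" "k \<in> A" for x k
    using that A by (auto intro: vadd_Vn singleton_Vn)
  \<comment> \<open>adding any element of A affects F as adding k0 does, so F (x + C) depends only
      on the parity of card C\<close>
  have parity: "F (vadd x C) = F (if even (card C) then x else vadd x {k0})"
    if "finite C" "C \<subseteq> A" "x \<in> Vn n" for C x
    using that
  proof (induction C arbitrary: x rule: finite_induct)
    case (insert k C)
    have k: "k \<in> A" and xk: "vadd x {k} \<in> Vn n"
      using insert single_Vn by auto
    note vadd_insert[OF insert.hyps(2)]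
    moreover have "F (vadd x {k}) = F (vadd x {k0})"
      using pair[OF xk k k0] by simp
    moreover have "F (vadd (vadd x {k}) {k0}) = F x"
      using pair[OF insert.prems(2) k k0] .
    ultimately show ?case
      using insert xk by simp
  qed simp
  have "finite B"
    using A B(1) by (meson finite_lessThan rev_finite_subset subset_trans)
  from parity[OF this B(1) x] show ?thesis
    using B(2) by simp
qed simp

lemma color_eq_iff_coset:
  assumes proper: "proper_coloring n k K" and n: "2 \<le> n"
    and invariant: "\<And>x w. x \<in> Vn n \<Longrightarrow> w \<in> Vn n \<Longrightarrow> W w \<Longrightarrow> K (vadd x w) = K x"
    and cover: "\<And>v. v \<in> Vn n \<Longrightarrow> W v \<or> (\<exists>u\<in>gens n. W (vadd v u))"
    and x: "x \<in> Vn n" and y: "y \<in> Vn n"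
  shows "K x = K y \<longleftrightarrow> W (vadd x y)"
proof
  assume "K x = K y"
  show "W (vadd x y)"
  proof (rule ccontr)
    assume "\<not> W (vadd x y)"
    then obtain u where u: "u \<in> gens n" "W (vadd (vadd x y) u)"
      using cover vadd_Vn[OF x y] by blast
    have "K y = K (vadd (vadd x u) (vadd (vadd x y) u))"
      by (simp add: vadd_vadd_cancel_common)
    also have "\<dots> = K (vadd x u)"
      using invariant u x vadd_gens_Vn vadd_Vn[OF x y] by blast
    finally show False
      using \<open>K x = K y\<close> proper edge_vadd_gens[OF n x u(1)]
      by (auto simp: proper_coloring_def)
  qed
next
  assume "W (vadd x y)"
  then show "K x = K y"
    using invariant[OF x vadd_Vn[OF x y]] by simp
qed

lemma color_classes_eq_cosets:
  assumes proper: "proper_coloring n k K"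
    and classes: "\<And>x y. x \<in> Vn n \<Longrightarrow> y \<in> Vn n \<Longrightarrow> K x = K y \<longleftrightarrow> W (vadd x y)"
    and surj: "\<And>c. c < k \<Longrightarrow> \<exists>x\<in>Vn n. K x = c"
  shows "color_classes n k K = {{y \<in> Vn n. W (vadd x y)} | x. x \<in> Vn n}"
proof -
  have class_eq: "color_class n K (K x) = {y \<in> Vn n. W (vadd x y)}" if "x \<in> Vn n" for x
    using classes[OF that] by (auto simp: color_class_def) metis+
  have "color_classes n k K = (\<lambda>x. color_class n K (K x)) ` Vn n"
  proof -
    have "K x < k" if "x \<in> Vn n" for x
      using proper that by (simp add: proper_coloring_def)
    then show ?thesis
      using surj unfolding color_classes_def by (auto simp: image_iff)
  qed
  then show ?thesis
    using class_eq by auto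
qed

lemma even_coloring_if_cosets:
  assumes classes: "\<And>x y. x \<in> Vn n \<Longrightarrow> y \<in> Vn n \<Longrightarrow> K x = K y \<longleftrightarrow> W (vadd x y)"
    and surj: "\<And>c. c < k \<Longrightarrow> \<exists>x\<in>Vn n. K x = c"
  shows "even_coloring n k K"
  unfolding even_coloring_def
proof (intro allI impI)
  fix c d assume "c < k" "d < k"
  then obtain x y where x: "x \<in> Vn n" "K x = c" and y: "y \<in> Vn n" "K y = d"
    using surj by metis
  define v where "v = vadd x y"
  have v: "v \<in> Vn n"
    using vadd_Vn[OF x(1) y(1)] by (simp add: v_def)
  have translate: "K (vadd z v) = d \<longleftrightarrow> K z = c" "K (vadd z v) = c \<longleftrightarrow> K z = d"
    if "z \<in> Vn n" for z
  proof -
    have "vadd (vadd z v) y = vadd z x" "vadd (vadd z v) x = vadd z y"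
      by (auto simp: v_def vadd_def)
    then show "K (vadd z v) = d \<longleftrightarrow> K z = c" "K (vadd z v) = c \<longleftrightarrow> K z = d"
      using classes[OF vadd_Vn[OF that v] y(1)] classes[OF vadd_Vn[OF that v] x(1)]
        classes[OF that x(1)] classes[OF that y(1)] x(2) y(2) by simp_all
  qed
  have "bij_betw (\<lambda>z. vadd z v) (color_class n K c) (color_class n K d)"
  proof (rule bij_betw_byWitness[where f' = "\<lambda>z. vadd z v"])
    show "(\<lambda>z. vadd z v) ` color_class n K c \<subseteq> color_class n K d"
      "(\<lambda>z. vadd z v) ` color_class n K d \<subseteq> color_class n K c"
      using translate vadd_Vn[OF _ v] by (auto simp: color_class_def)
  qed simp_all
  then show "card (color_class n K c) = card (color_class n K d)"
    by (rule bij_betw_same_card)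
qed

lemma coordinate_cosets:
  assumes "i < n" "j < n" "i \<noteq> j"
  shows "{{y \<in> Vn n. i \<notin> vadd x y \<and> j \<notin> vadd x y} | x. x \<in> Vn n} =
    {{x \<in> Vn n. (i \<in> x \<longleftrightarrow> a) \<and> (j \<in> x \<longleftrightarrow> b)} | a b. True}"
proof -
  have coset: "{y \<in> Vn n. i \<notin> vadd x y \<and> j \<notin> vadd x y} =
      {y \<in> Vn n. (i \<in> y \<longleftrightarrow> i \<in> x) \<and> (j \<in> y \<longleftrightarrow> j \<in> x)}" for x
    by (auto simp: mem_vadd)
  have rep: "\<exists>x\<in>Vn n. (i \<in> x \<longleftrightarrow> a) \<and> (j \<in> x \<longleftrightarrow> b)" for a b
  proof
    let ?x = "(if a then {i} else {}) \<union> (if b then {j} else {})"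
    show "?x \<in> Vn n"
      using assms by (auto simp: Vn_def)
    show "(i \<in> ?x \<longleftrightarrow> a) \<and> (j \<in> ?x \<longleftrightarrow> b)"
      using assms by auto
  qed
  show ?thesis
  proof (intro equalityI subsetI)
    fix C
    assume "C \<in> {{y \<in> Vn n. i \<notin> vadd x y \<and> j \<notin> vadd x y} | x. x \<in> Vn n}"
    then obtain x where "C = {y \<in> Vn n. (i \<in> y \<longleftrightarrow> i \<in> x) \<and> (j \<in> y \<longleftrightarrow> j \<in> x)}"
      unfolding coset by blast
    then show "C \<in> {{x \<in> Vn n. (i \<in> x \<longleftrightarrow> a) \<and> (j \<in> x \<longleftrightarrow> b)} | a b. True}"
      by blast
  next
    fix C
    assume "C \<in> {{x \<in> Vn n. (i \<in> x \<longleftrightarrow> a) \<and> (j \<in> x \<longleftrightarrow> b)} | a b. True}"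
    then obtain a b where C: "C = {x \<in> Vn n. (i \<in> x \<longleftrightarrow> a) \<and> (j \<in> x \<longleftrightarrow> b)}"
      by blast
    obtain x where x: "x \<in> Vn n" "(i \<in> x \<longleftrightarrow> a) \<and> (j \<in> x \<longleftrightarrow> b)"
      using rep by blast
    have "C = {y \<in> Vn n. i \<notin> vadd x y \<and> j \<notin> vadd x y}"
      unfolding coset C using x(2) by simp
    then show "C \<in> {{y \<in> Vn n. i \<notin> vadd x y \<and> j \<notin> vadd x y} | x. x \<in> Vn n}"
      using x(1) by blast
  qed
qed

lemma parity_cosets:
  assumes "j < n" "2 \<le> n"
  shows "{{y \<in> Vn n. even (card (vadd x y)) \<and> j \<notin> vadd x y} | x. x \<in> Vn n} =
    {{v \<in> Vn n. wt v mod 2 = \<nu> \<and> (j \<in> v \<longleftrightarrow> \<mu>)} | \<nu> \<mu>. \<nu> < (2::nat)}"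
proof -
  have mod_2_eq: "(a::nat) mod 2 = b mod 2 \<longleftrightarrow> (even a \<longleftrightarrow> even b)" for a b
    by presburger
  have coset: "{y \<in> Vn n. even (card (vadd x y)) \<and> j \<notin> vadd x y} =
      {v \<in> Vn n. wt v mod 2 = card x mod 2 \<and> (j \<in> v \<longleftrightarrow> j \<in> x)}" if "x \<in> Vn n" for x
    using that by (auto simp: wt_def mod_2_eq mem_vadd even_card_vadd finite_if_mem_Vn)
  define k where "k = (if j = 0 then 1 else 0 :: nat)"
  have k: "k < n" "k \<noteq> j"
    using assms by (auto simp: k_def)
  have rep: "\<exists>x\<in>Vn n. card x mod 2 = \<nu> \<and> (j \<in> x \<longleftrightarrow> \<mu>)" if "\<nu> < 2" for \<nu> \<mu>
  proof
    let ?x = "(if \<mu> then {j} else {}) \<union> (if (\<nu> = 1) \<noteq> \<mu> then {k} else {})"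
    show "?x \<in> Vn n"
      using assms k by (auto simp: Vn_def)
    show "card ?x mod 2 = \<nu> \<and> (j \<in> ?x \<longleftrightarrow> \<mu>)"
      using that k by (cases \<mu>; cases "\<nu> = 1") auto
  qed
  show ?thesis
  proof (intro equalityI subsetI)
    fix C
    assume "C \<in> {{y \<in> Vn n. even (card (vadd x y)) \<and> j \<notin> vadd x y} | x. x \<in> Vn n}"
    then obtain x where "x \<in> Vn n"
      "C = {v \<in> Vn n. wt v mod 2 = card x mod 2 \<and> (j \<in> v \<longleftrightarrow> j \<in> x)}"
      using coset by blast
    moreover have "card x mod 2 < 2"
      by simp
    ultimately show "C \<in> {{v \<in> Vn n. wt v mod 2 = \<nu> \<and> (j \<in> v \<longleftrightarrow> \<mu>)} | \<nu> \<mu>. \<nu> < 2}"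
      by blast
  next
    fix C
    assume "C \<in> {{v \<in> Vn n. wt v mod 2 = \<nu> \<and> (j \<in> v \<longleftrightarrow> \<mu>)} | \<nu> \<mu>. \<nu> < 2}"
    then obtain \<nu> \<mu> where C: "C = {v \<in> Vn n. wt v mod 2 = \<nu> \<and> (j \<in> v \<longleftrightarrow> \<mu>)}" "\<nu> < 2"
      by blast
    obtain x where x: "x \<in> Vn n" "card x mod 2 = \<nu>" "j \<in> x \<longleftrightarrow> \<mu>"
      using rep[OF C(2)] by blast
    have "C = {y \<in> Vn n. even (card (vadd x y)) \<and> j \<notin> vadd x y}"
      unfolding coset[OF x(1)] C(1) using x(2,3) by simp
    then show "C \<in> {{y \<in> Vn n. even (card (vadd x y)) \<and> j \<notin> vadd x y} | x. x \<in> Vn n}"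
      using x(1) by blast
  qed
qed

section \<open>Transition edges of proper 4-colorings\<close>

lemma four_values_cover:
  fixes a b c d e :: nat
  assumes "distinct [a, b, c, d]" "a < 4" "b < 4" "c < 4" "d < 4" "e < 4"
  shows "e \<in> {a, b, c, d}"
proof -
  have "card {a, b, c, d} = card {..<4::nat}"
    using assms(1) by simp
  then have "{a, b, c, d} = {..<4}"
    using assms(2-5) by (intro card_seteq) auto
  then show ?thesis
    using assms(6) by simp
qed

definition transition_nbrs :: "nat \<Rightarrow> nat \<Rightarrow> (nat set \<Rightarrow> nat) \<Rightarrow> nat set \<Rightarrow> nat set set" where
  "transition_nbrs n k K x = {y. (x, y) \<in> transition_edges n k K}"

lemma transition_edgeD1:
  assumes "(x, y) \<in> transition_edges n k K" "(x, z) \<in> edges n" "z \<noteq> y"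
  shows "K z \<noteq> K y"
proof -
  have "x \<noteq> y" "x \<noteq> z"
    using assms(1,2) by (auto simp: transition_edges_def edges_def)
  moreover have "swap_col K x y x \<noteq> swap_col K x y z"
    using assms(1,2) by (auto simp: transition_edges_def proper_coloring_def)
  ultimately show ?thesis
    using assms(3) by (simp add: swap_col_def)
qed

lemma transition_edgeD2:
  assumes "(x, y) \<in> transition_edges n k K" "(y, z) \<in> edges n" "z \<noteq> x"
  shows "K z \<noteq> K x"
proof -
  have "x \<noteq> y" "y \<noteq> z"
    using assms(1,2) by (auto simp: transition_edges_def edges_def)
  moreover have "swap_col K x y y \<noteq> swap_col K x y z"
    using assms(1,2) by (auto simp: transition_edges_def proper_coloring_def)
  ultimately show ?thesis
    using assms(3) by (simp add: swap_col_def)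
qed

locale four_coloring =
  fixes n :: nat and K :: "nat set \<Rightarrow> nat"
  assumes three_le_n: "3 \<le> n" and proper: "proper_coloring n 4 K"
begin

abbreviation T :: "(nat set \<times> nat set) set" where
  "T \<equiv> transition_edges n 4 K"

lemma two_le_n: "2 \<le> n"
  using three_le_n by simp

lemma obtain_gens_notin3:
  obtains p where "p \<in> gens n" "p \<notin> {a, b, c}"
proof (rule exists_gens_notin)
  show "card {a, b, c} \<le> n"
    using card_length[of "[a, b, c]"] three_le_n by simp
qed auto

lemma color_less_4: "x \<in> Vn n \<Longrightarrow> K x < 4"
  using proper by (simp add: proper_coloring_def)

lemma color_neq_if_edge: "(x, y) \<in> edges n \<Longrightarrow> K x \<noteq> K y"
  using proper by (auto simp: proper_coloring_def)

lemma edge_vadd: "x \<in> Vn n \<Longrightarrow> u \<in> gens n \<Longrightarrow> (x, vadd x u) \<in> edges n"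
  using edge_vadd_gens[OF two_le_n] .

lemma card_transition_nbrs_le_2:
  assumes x: "x \<in> Vn n"
  shows "card (transition_nbrs n 4 K x) \<le> 2"
proof (rule ccontr)
  assume "\<not> ?thesis"
  then obtain Y where Y: "Y \<subseteq> transition_nbrs n 4 K x" "card Y = 3"
    by (metis obtain_subset_with_card_n not_le Suc_leI numeral_3_eq_3 numeral_2_eq_2)
  then obtain y1 y2 y3 where y: "Y = {y1, y2, y3}" "distinct [y1, y2, y3]"
    by (auto simp: card_3_iff)
  have tr: "(x, y) \<in> T" if "y \<in> Y" for y
    using that Y(1) by (auto simp: transition_nbrs_def)
  have e: "(x, y) \<in> edges n" if "y \<in> Y" for y
    using tr[OF that] by (simp add: transition_edges_def)
  have "distinct [K x, K y1, K y2, K y3]"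
    using y color_neq_if_edge[OF e] transition_edgeD1[OF tr e] by auto
  moreover obtain p where p: "p \<in> gens n" "p \<notin> vadd x ` Y"
  proof (rule exists_gens_notin)
    show "finite (vadd x ` Y)"
      using y(1) by simp
    show "card (vadd x ` Y) \<le> n"
      using card_image_le[of Y "vadd x"] y(1) Y(2) three_le_n by simp
  qed
  moreover have "K (vadd x p) \<noteq> K y" if "y \<in> Y" for y
  proof -
    have "vadd x p \<noteq> y"
      using p(2) that by force
    then show ?thesis
      using transition_edgeD1[OF tr[OF that] edge_vadd[OF x p(1)]] by simp
  qed
  moreover have "K y < 4" if "y \<in> Y" for y
    using e[OF that] two_le_n by (simp add: edges_iff color_less_4)
  ultimately show False
    using four_values_cover[of "K x" "K y1" "K y2" "K y3" "K (vadd x p)"] y(1)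
      color_less_4[OF x] color_less_4[OF vadd_gens_Vn[OF x p(1)]]
      color_neq_if_edge[OF edge_vadd[OF x p(1)]] by auto
qed

definition two_transitions :: "nat set \<Rightarrow> nat set \<Rightarrow> nat set \<Rightarrow> bool" where
  "two_transitions x s t \<longleftrightarrow> x \<in> Vn n \<and> s \<in> gens n \<and> t \<in> gens n \<and> s \<noteq> t \<and>
     (x, vadd x s) \<in> T \<and> (x, vadd x t) \<in> T"

lemma two_transitions_commute: "two_transitions x s t \<Longrightarrow> two_transitions x t s"
  by (auto simp: two_transitions_def)

context
  fixes x s t
  assumes two: "two_transitions x s t"
begin

lemma two_transitionsD:
  "x \<in> Vn n" "s \<in> gens n" "t \<in> gens n" "s \<noteq> t" "(x, vadd x s) \<in> T" "(x, vadd x t) \<in> T"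
  using two by (simp_all add: two_transitions_def)

lemma colors_around_distinct:
  assumes p: "p \<in> gens n" "p \<notin> {s, t}"
  shows "distinct [K x, K (vadd x s), K (vadd x t), K (vadd x p)]"
proof -
  note x = two_transitionsD(1) and st = two_transitionsD(2-4) and tr = two_transitionsD(5,6)
  have "K x \<noteq> K (vadd x u)" if "u \<in> gens n" for u
    using color_neq_if_edge[OF edge_vadd[OF x that]] .
  moreover have "K (vadd x t) \<noteq> K (vadd x s)" "K (vadd x p) \<noteq> K (vadd x s)"
    using transition_edgeD1[OF tr(1) edge_vadd[OF x]] st p by auto
  moreover have "K (vadd x p) \<noteq> K (vadd x t)"
    using transition_edgeD1[OF tr(2) edge_vadd[OF x p(1)]] p by auto
  ultimately show ?thesis
    using st p by auto
qed

lemma colors_around_cover: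
  assumes "p \<in> gens n" "p \<notin> {s, t}" "w \<in> Vn n"
  shows "K w \<in> {K x, K (vadd x s), K (vadd x t), K (vadd x p)}"
  using four_values_cover[OF colors_around_distinct[OF assms(1,2)]] assms color_less_4
    two_transitionsD(1-3) vadd_gens_Vn by simp

lemma other_colors_eq:
  assumes "p \<in> gens n" "p \<notin> {s, t}" "q \<in> gens n" "q \<notin> {s, t}"
  shows "K (vadd x q) = K (vadd x p)"
  using colors_around_cover[OF assms(1,2) vadd_gens_Vn[OF two_transitionsD(1) assms(3)]]
    colors_around_distinct[OF assms(3,4)] by auto

lemma color_after_transition:
  assumes p: "p \<in> gens n" "p \<notin> {s, t}"
  shows "K (vadd (vadd x s) p) = K (vadd x t)"
proof -
  note x = two_transitionsD(1) and st = two_transitionsD(2-4) and tr = two_transitionsD(5,6)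
  define w where "w = vadd (vadd x s) p"
  have xs: "vadd x s \<in> Vn n" and w: "w \<in> Vn n"
    using x st p by (simp_all add: w_def vadd_gens_Vn)
  have "K w \<noteq> K x"
    using transition_edgeD2[OF tr(1) edge_vadd[OF xs p(1)]] p by (auto simp: w_def vadd_assoc)
  moreover have "K w \<noteq> K (vadd x s)"
    using color_neq_if_edge[OF edge_vadd[OF xs p(1)]] by (simp add: w_def)
  moreover have "K w \<noteq> K (vadd x p)"
    using color_neq_if_edge[OF edge_vadd[OF vadd_gens_Vn[OF x p(1)] st(1)]]
    by (simp add: w_def vadd_right_commute[of x s])
  ultimately show ?thesis
    using colors_around_cover[OF p w] unfolding w_def by auto
qed

lemma color_after_both:
  assumes p: "p \<in> gens n" "p \<notin> {s, t}"
  shows "K (vadd (vadd x s) t) = K (vadd x p)"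
proof -
  note x = two_transitionsD(1) and st = two_transitionsD(2-4) and tr = two_transitionsD(5,6)
  define w where "w = vadd (vadd x s) t"
  have xs: "vadd x s \<in> Vn n" and w: "w \<in> Vn n"
    using x st by (simp_all add: w_def vadd_gens_Vn)
  have "K w \<noteq> K x"
    using transition_edgeD2[OF tr(1) edge_vadd[OF xs st(2)]] st by (auto simp: w_def vadd_assoc)
  moreover have "K w \<noteq> K (vadd x s)"
    using color_neq_if_edge[OF edge_vadd[OF xs st(2)]] by (simp add: w_def)
  moreover have "K w \<noteq> K (vadd x t)"
    using color_neq_if_edge[OF edge_vadd[OF vadd_gens_Vn[OF x st(2)] st(1)]]
    by (simp add: w_def vadd_right_commute[of x s])
  ultimately show ?thesis
    using colors_around_cover[OF p w] unfolding w_def by auto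
qed

lemma transition_nbrs_after_transition:
  "transition_nbrs n 4 K (vadd x s) \<subseteq> {vadd (vadd x s) s, vadd (vadd x s) t}"
proof
  note x = two_transitionsD(1) and st = two_transitionsD(2-4) and tr = two_transitionsD(5,6)
  define y where "y = vadd x s"
  have y: "y \<in> Vn n"
    using x st by (simp add: y_def vadd_gens_Vn)
  fix q
  assume "q \<in> transition_nbrs n 4 K (vadd x s)"
  then have tq: "(y, q) \<in> T"
    by (simp add: transition_nbrs_def y_def)
  have eq: "(y, q) \<in> edges n"
    using tq by (simp add: transition_edges_def)
  then have q: "q \<in> Vn n"
    using two_le_n by (simp add: edges_iff)
  show "q \<in> {vadd (vadd x s) s, vadd (vadd x s) t}"
  proof (cases "q = x")
    case False
    obtain p1 where p1: "p1 \<in> gens n" "p1 \<notin> {s, t}"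
      using obtain_gens_notin3[of s t t] by auto
    obtain p2 where p2: "p2 \<in> gens n" "p2 \<notin> {s, t, p1}"
      by (rule obtain_gens_notin3)
    \<comment> \<open>two different neighbors of y have the color of x + t, so no transition neighbor can\<close>
    have "K q \<noteq> K (vadd x t)"
    proof
      assume Kq: "K q = K (vadd x t)"
      have nbr_eq_q: "vadd y p = q" if "p \<in> gens n" "p \<notin> {s, t}" for p
        using transition_edgeD1[OF tq edge_vadd[OF y that(1)]] color_after_transition[OF that] Kq
        by (auto simp: y_def)
      have "vadd y p1 = vadd y p2"
        using nbr_eq_q[OF p1] nbr_eq_q[of p2] p2 by simp
      then show False
        using p2(2) by simp
    qed
    moreover have "K q \<noteq> K x"
      using transition_edgeD1[OF tq edges_sym[OF edge_vadd[OF x st(1)], folded y_def]] False by simp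
    moreover have "K q \<noteq> K y"
      using color_neq_if_edge[OF eq] by simp
    ultimately have "K q = K (vadd y t)"
      using colors_around_cover[OF p1 q] color_after_both[OF p1] by (auto simp: y_def)
    then have "q = vadd y t"
      using transition_edgeD1[OF tq edge_vadd[OF y st(2)]] by auto
    then show ?thesis
      by (simp add: y_def)
  qed simp
qed

end

lemma transition_nbrs_after_other:
  assumes two: "two_transitions x s t" and u: "u \<in> gens n" "u \<notin> {s, t}"
  shows "transition_nbrs n 4 K (vadd x u) \<subseteq> {vadd (vadd x u) s, vadd (vadd x u) t}"
proof
  note x = two_transitionsD[OF two]
  define z where "z = vadd x u"
  have z: "z \<in> Vn n"
    using x u by (simp add: z_def vadd_gens_Vn)
  fix q
  assume "q \<in> transition_nbrs n 4 K (vadd x u)"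
  then have tq: "(z, q) \<in> T"
    by (simp add: transition_nbrs_def z_def)
  have eq: "(z, q) \<in> edges n"
    using tq by (simp add: transition_edges_def)
  then have q: "q \<in> Vn n"
    using two_le_n by (simp add: edges_iff)
  have "q \<noteq> x"
  proof
    assume "q = x"
    obtain p where p: "p \<in> gens n" "p \<notin> {s, t, u}"
      by (rule obtain_gens_notin3)
    have "K (vadd x p) \<noteq> K z"
      using transition_edgeD2[OF tq[unfolded \<open>q = x\<close>] edge_vadd[OF x(1) p(1)]] p
      by (simp add: z_def)
    then show False
      using other_colors_eq[OF two u] p by (auto simp: z_def)
  qed
  then have "K q \<noteq> K x"
    using transition_edgeD1[OF tq edges_sym[OF edge_vadd[OF x(1) u(1)], folded z_def]] by simp
  moreover have "K q \<noteq> K z"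
    using color_neq_if_edge[OF eq] by simp
  moreover have "K (vadd z s) = K (vadd x t)" "K (vadd z t) = K (vadd x s)"
    using color_after_transition[OF two u] color_after_transition[OF two_transitions_commute[OF two]] u
    by (auto simp: z_def vadd_right_commute[of x u])
  moreover have "q = vadd z s" if "K q = K (vadd z s)"
    using transition_edgeD1[OF tq edge_vadd[OF z x(2)]] that by auto
  moreover have "q = vadd z t" if "K q = K (vadd z t)"
    using transition_edgeD1[OF tq edge_vadd[OF z x(3)]] that by auto
  ultimately show "q \<in> {vadd (vadd x u) s, vadd (vadd x u) t}"
    using colors_around_cover[OF two u q] by (auto simp: z_def)
qed

lemma two_transitions_vadd:
  assumes deg: "\<And>y. y \<in> Vn n \<Longrightarrow> card (transition_nbrs n 4 K y) = 2"
    and two: "two_transitions x s t" and u: "u \<in> gens n"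
  shows "two_transitions (vadd x u) s t"
proof -
  note x = two_transitionsD[OF two]
  have sub: "transition_nbrs n 4 K (vadd x u) \<subseteq> {vadd (vadd x u) s, vadd (vadd x u) t}"
  proof -
    consider "u = s" | "u = t" | "u \<notin> {s, t}"
      by blast
    then show ?thesis
    proof cases
      case 1
      then show ?thesis
        using transition_nbrs_after_transition[OF two] by simp
    next
      case 2
      then show ?thesis
        using transition_nbrs_after_transition[OF two_transitions_commute[OF two]] by auto
    qed (rule transition_nbrs_after_other[OF two u])
  qed
  have xu: "vadd x u \<in> Vn n"
    using x(1) u by (rule vadd_gens_Vn)
  have "card {vadd (vadd x u) s, vadd (vadd x u) t} = 2"
    using x(4) by simp
  then have "transition_nbrs n 4 K (vadd x u) = {vadd (vadd x u) s, vadd (vadd x u) t}"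
    using card_seteq[OF _ sub] deg[OF xu] by simp
  then show ?thesis
    using xu x(2-4) by (auto simp: two_transitions_def transition_nbrs_def)
qed

lemma two_transitions_everywhere:
  assumes deg: "\<And>y. y \<in> Vn n \<Longrightarrow> card (transition_nbrs n 4 K y) = 2"
  obtains s t where "\<And>x. x \<in> Vn n \<Longrightarrow> two_transitions x s t"
proof -
  have empty: "{} \<in> Vn n"
    by (simp add: Vn_def)
  then obtain s t where st: "transition_nbrs n 4 K {} = {s, t}" "s \<noteq> t"
    using deg by (meson card_2_iff)
  then have "({}, s) \<in> edges n" "({}, t) \<in> edges n"
    by (auto simp: transition_nbrs_def transition_edges_def)
  then have "two_transitions {} s t"
    using st two_le_n by (auto simp: two_transitions_def transition_nbrs_def edges_iff)
  then have "two_transitions x s t" if "x \<in> Vn n" for x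
    using Vn_induct_gens[where P = "\<lambda>x. two_transitions x s t", OF empty _ _ that]
      two_transitions_vadd[OF deg] by blast
  then show ?thesis
    by (rule that)
qed

lemma all_colors_used:
  assumes two: "two_transitions x s t" and c: "c < 4"
  shows "\<exists>y\<in>Vn n. K y = c"
proof -
  note x = two_transitionsD[OF two]
  obtain p where p: "p \<in> gens n" "p \<notin> {s, t}"
    using obtain_gens_notin3[of s t t] by auto
  have "c \<in> {K x, K (vadd x s), K (vadd x t), K (vadd x p)}"
    using four_values_cover[OF colors_around_distinct[OF two p]] c color_less_4 x p
      vadd_gens_Vn by simp
  then show ?thesis
    using x(1-3) p(1) vadd_gens_Vn by blast
qed

lemma coordinate_coloring:
  assumes ij: "i < n" "j < n" "i \<noteq> j"
    and two: "\<And>x. x \<in> Vn n \<Longrightarrow> two_transitions x (fvec n i) (fvec n j)"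
    and x: "x \<in> Vn n" and y: "y \<in> Vn n"
  shows "K x = K y \<longleftrightarrow> i \<notin> vadd x y \<and> j \<notin> vadd x y"
proof (rule color_eq_iff_coset[OF proper two_le_n _ _ x y])
  have fvec_other: "fvec n k \<in> gens n" "fvec n k \<notin> {fvec n i, fvec n j}"
    if "k \<in> {..<n} - {i, j}" for k
    using that ij by (auto simp: fvec_in_gens fvec_inj)
  have ones: "ones n \<in> gens n" "ones n \<notin> {fvec n i, fvec n j}"
    using ij ones_ne_fvec by (auto simp: ones_in_gens)
  \<comment> \<open>e_k = 1 + f_k, and both 1 and f_k are non-transition directions\<close>
  have single: "K (vadd z {k}) = K z" if "z \<in> Vn n" "k \<in> {..<n} - {i, j}" for z k
  proof -
    have "vadd z (ones n) \<in> Vn n"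
      using that(1) ones(1) by (rule vadd_gens_Vn)
    from other_colors_eq[OF two[OF this] ones fvec_other[OF that(2)]]
    show ?thesis
      using vadd_ones_fvec[of k n] that(2) by (simp add: vadd_assoc)
  qed
  show "K (vadd z w) = K z" if "z \<in> Vn n" "w \<in> Vn n" "i \<notin> w \<and> j \<notin> w" for z w
    using vadd_subset_invariant[OF single _ _ that(1)] that(2,3) by (auto simp: Vn_def)
  show "i \<notin> v \<and> j \<notin> v \<or> (\<exists>u\<in>gens n. i \<notin> vadd v u \<and> j \<notin> vadd v u)" for v
  proof -
    have "\<exists>u\<in>{ones n, fvec n i, fvec n j}. i \<notin> vadd v u \<and> j \<notin> vadd v u"
      if "\<not> (i \<notin> v \<and> j \<notin> v)"
      using that ij by (auto simp: mem_vadd fvec_eq ones_def)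
    then show ?thesis
      using ij ones_in_gens fvec_in_gens by blast
  qed
qed

lemma parity_invariance:
  assumes j: "j < n"
    and two: "\<And>x. x \<in> Vn n \<Longrightarrow> two_transitions x (ones n) (fvec n j)"
    and x: "x \<in> Vn n" and w: "w \<in> Vn n" "even (card w)" "j \<notin> w"
  shows "K (vadd x w) = K x"
proof (rule vadd_even_subset_invariant[where A = "{..<n} - {j}"])
  have fvec_other: "fvec n k \<in> gens n" "fvec n k \<notin> {ones n, fvec n j}"
    if "k \<in> {..<n} - {j}" for k
    using that j by (auto simp: fvec_in_gens fvec_inj ones_ne_fvec[symmetric])
  \<comment> \<open>e_k + e_l = f_k + f_l, and f_k, f_l are non-transition directions\<close>
  show "K (vadd (vadd z {k}) {l}) = K z"
    if "z \<in> Vn n" "k \<in> {..<n} - {j}" "l \<in> {..<n} - {j}" for z k l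
  proof -
    define z' where "z' = vadd (vadd z (ones n)) {k}"
    have z': "z' \<in> Vn n"
      using that vadd_Vn[OF vadd_gens_Vn[OF that(1) ones_in_gens] singleton_Vn, of k]
      by (simp add: z'_def)
    moreover have "vadd z' (fvec n k) = z" "vadd z' (fvec n l) = vadd (vadd z {k}) {l}"
      using that by (auto simp: z'_def mem_vadd fvec_eq ones_def Vn_def)
    ultimately show ?thesis
      using other_colors_eq[OF two[OF z'] fvec_other[OF that(2)] fvec_other[OF that(3)]] by simp
  qed
qed (use w x in \<open>auto simp: Vn_def\<close>)

lemma even_if_parity_transitions:
  assumes j: "j < n" and two: "\<And>x. x \<in> Vn n \<Longrightarrow> two_transitions x (ones n) (fvec n j)"
  shows "even n"
proof (rule ccontr)
  assume "odd n"
  have empty: "{} \<in> Vn n"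
    by (simp add: Vn_def)
  \<comment> \<open>for odd n the neighbor f_j of 0 would lie in the invariance subgroup\<close>
  have "even (card (fvec n j))" "j \<notin> fvec n j"
    using \<open>odd n\<close> j by (simp_all add: fvec_eq)
  then have "K (vadd {} (fvec n j)) = K {}"
    using parity_invariance[OF j two empty] gens_subset_Vn fvec_in_gens[OF j] by blast
  then show False
    using color_neq_if_edge[OF edge_vadd[OF empty fvec_in_gens[OF j]]] by simp
qed

lemma parity_coloring:
  assumes j: "j < n" and two: "\<And>x. x \<in> Vn n \<Longrightarrow> two_transitions x (ones n) (fvec n j)"
    and x: "x \<in> Vn n" and y: "y \<in> Vn n"
  shows "K x = K y \<longleftrightarrow> even (card (vadd x y)) \<and> j \<notin> vadd x y"
proof (rule color_eq_iff_coset[OF proper two_le_n _ _ x y])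
  show "K (vadd z w) = K z" if "z \<in> Vn n" "w \<in> Vn n" "even (card w) \<and> j \<notin> w" for z w
    using parity_invariance[OF j two that(1,2)] that(3) by simp
  define k0 where "k0 = (if j = 0 then 1 else 0 :: nat)"
  have k0: "k0 < n" "k0 \<noteq> j"
    using two_le_n by (auto simp: k0_def)
  show "even (card v) \<and> j \<notin> v \<or> (\<exists>u\<in>gens n. even (card (vadd v u)) \<and> j \<notin> vadd v u)"
    if "v \<in> Vn n" for v
  proof -
    have "finite v" "finite (ones n)" "finite (fvec n j)" "finite (fvec n k0)"
      using that finite_if_mem_Vn by (auto simp: ones_def fvec_eq j k0)
    moreover have "card (ones n) = n" "card (fvec n j) = n - 1" "card (fvec n k0) = n - 1"
      using j k0 by (simp_all add: ones_def fvec_eq)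
    moreover have "even n" "1 \<le> n"
      using even_if_parity_transitions[OF j two] two_le_n by simp_all
    ultimately have "\<exists>u\<in>{ones n, fvec n j, fvec n k0}. even (card (vadd v u)) \<and> j \<notin> vadd v u"
      if "\<not> (even (card v) \<and> j \<notin> v)"
      using that j k0 by (auto simp: even_card_vadd mem_vadd fvec_eq ones_def)
    then show ?thesis
      using j k0 ones_in_gens fvec_in_gens by blast
  qed
qed

lemma transition_edges_eq_Sigma:
  "T = Sigma (Vn n) (transition_nbrs n 4 K)"
  using two_le_n by (auto simp: transition_nbrs_def transition_edges_def edges_iff)

lemma two_transition_nbrs_if_rb:
  assumes rb: "rb n 4 K = 2 / (real n + 1)" and x: "x \<in> Vn n"
  shows "card (transition_nbrs n 4 K x) = 2"
proof -
  have "finite (transition_nbrs n 4 K y)" for y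
    using finite_subset[of _ "Vn n"] finite_Vn
    by (auto simp: transition_nbrs_def transition_edges_def edges_def)
  then have card_T: "card T = (\<Sum>y\<in>Vn n. card (transition_nbrs n 4 K y))"
    unfolding transition_edges_eq_Sigma by (simp add: card_SigmaI finite_Vn)
  have "real (card (edges n)) = 2 ^ n * (real n + 1)"
    using card_edges[OF two_le_n] by (simp add: algebra_simps)
  then have "real (card T) / (2 ^ n * (real n + 1)) = 2 / (real n + 1)"
    using rb unfolding rb_def by simp
  moreover have "(2::real) ^ n * (real n + 1) \<noteq> 0" "real n + 1 \<noteq> 0"
    by (simp_all add: add_pos_pos)
  ultimately have "real (card T) = 2 / (real n + 1) * (2 ^ n * (real n + 1))"
    by (simp only: divide_eq_eq) simp
  then have "real (card T) = real (2 * card (Vn n))"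
    by (simp add: card_Vn)
  then have sums: "(\<Sum>y\<in>Vn n. card (transition_nbrs n 4 K y)) = (\<Sum>y\<in>Vn n. 2)"
    unfolding card_T of_nat_eq_iff by simp
  \<comment> \<open>every vertex has at most two transition neighbors, so the average 2 forces equality\<close>
  show ?thesis
  proof (rule ccontr)
    assume "card (transition_nbrs n 4 K x) \<noteq> 2"
    then have "card (transition_nbrs n 4 K x) < 2"
      using card_transition_nbrs_le_2[OF x] by simp
    then have "(\<Sum>y\<in>Vn n. card (transition_nbrs n 4 K y)) < (\<Sum>y\<in>Vn n. 2)"
      by (intro sum_strict_mono_ex1[OF finite_Vn]) (use card_transition_nbrs_le_2 x in auto)
    with sums show False
      by simp
  qed
qed

lemma coordinate_color_classes:
  assumes ij: "i < j" "j < n"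
    and T_eq: "T = {(x, y). x \<in> Vn n \<and> y \<in> Vn n \<and> vadd x y \<in> {fvec n i, fvec n j}}"
  shows "color_classes n 4 K = {{x \<in> Vn n. (i \<in> x \<longleftrightarrow> a) \<and> (j \<in> x \<longleftrightarrow> b)} | a b. True}"
proof -
  have ij': "i < n" "j < n" "i \<noteq> j"
    using ij by simp_all
  have two: "two_transitions x (fvec n i) (fvec n j)" if "x \<in> Vn n" for x
    using that ij' fvec_in_gens fvec_inj vadd_gens_Vn by (auto simp: two_transitions_def T_eq)
  have "{} \<in> Vn n"
    by (simp add: Vn_def)
  have "color_classes n 4 K = {{y \<in> Vn n. i \<notin> vadd x y \<and> j \<notin> vadd x y} | x. x \<in> Vn n}"
    by (rule color_classes_eq_cosets[OF proper, where W = "\<lambda>v. i \<notin> v \<and> j \<notin> v"])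
      (use coordinate_coloring[OF ij' two] all_colors_used[OF two[OF \<open>{} \<in> Vn n\<close>]] in auto)
  then show ?thesis
    using coordinate_cosets[OF ij'] by simp
qed

lemma parity_color_classes:
  assumes j: "j < n"
    and T_eq: "T = {(x, y). x \<in> Vn n \<and> y \<in> Vn n \<and> vadd x y \<in> {ones n, fvec n j}}"
  shows "even n \<and> color_classes n 4 K =
    {{v \<in> Vn n. wt v mod 2 = \<nu> \<and> (j \<in> v \<longleftrightarrow> \<mu>)} | \<nu> \<mu>. \<nu> < (2::nat)}"
proof -
  have two: "two_transitions x (ones n) (fvec n j)" if "x \<in> Vn n" for x
    using that j ones_in_gens fvec_in_gens ones_ne_fvec vadd_gens_Vn
    by (auto simp: two_transitions_def T_eq)
  have "{} \<in> Vn n"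
    by (simp add: Vn_def)
  have "color_classes n 4 K =
      {{y \<in> Vn n. even (card (vadd x y)) \<and> j \<notin> vadd x y} | x. x \<in> Vn n}"
    by (rule color_classes_eq_cosets[OF proper, where W = "\<lambda>v. even (card v) \<and> j \<notin> v"])
      (use parity_coloring[OF j two] all_colors_used[OF two[OF \<open>{} \<in> Vn n\<close>]] in auto)
  then show ?thesis
    using even_if_parity_transitions[OF j two] parity_cosets[OF j two_le_n] by simp
qed

lemma even_coloring_if_rb:
  assumes rb: "rb n 4 K = 2 / (real n + 1)"
  shows "even_coloring n 4 K"
proof -
  obtain s t where two: "\<And>x. x \<in> Vn n \<Longrightarrow> two_transitions x s t"
    using two_transitions_everywhere[OF two_transition_nbrs_if_rb[OF rb]] by blast
  have "{} \<in> Vn n"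
    by (simp add: Vn_def)
  note st = two_transitionsD[OF two[OF this]]
  have "\<exists>W. \<forall>x\<in>Vn n. \<forall>y\<in>Vn n. K x = K y \<longleftrightarrow> W (vadd x y)"
  proof -
    consider i j where "i < n" "j < n" "i \<noteq> j" "s = fvec n i" "t = fvec n j"
      | j where "j < n" "s = ones n" "t = fvec n j"
      | j where "j < n" "t = ones n" "s = fvec n j"
      using st(2-4) by (auto simp: gens_def)
    then show ?thesis
    proof cases
      case 1
      then have "\<forall>x\<in>Vn n. \<forall>y\<in>Vn n. K x = K y \<longleftrightarrow> i \<notin> vadd x y \<and> j \<notin> vadd x y"
        using coordinate_coloring[OF 1(1-3)] two by simp
      then show ?thesis
        by (rule exI[where x = "\<lambda>v. i \<notin> v \<and> j \<notin> v"])
    next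
      case 2
      then have "\<forall>x\<in>Vn n. \<forall>y\<in>Vn n. K x = K y \<longleftrightarrow> even (card (vadd x y)) \<and> j \<notin> vadd x y"
        using parity_coloring[OF 2(1)] two by simp
      then show ?thesis
        by (rule exI[where x = "\<lambda>v. even (card v) \<and> j \<notin> v"])
    next
      case 3
      then have "\<forall>x\<in>Vn n. \<forall>y\<in>Vn n. K x = K y \<longleftrightarrow> even (card (vadd x y)) \<and> j \<notin> vadd x y"
        using parity_coloring[OF 3(1)] two two_transitions_commute by simp
      then show ?thesis
        by (rule exI[where x = "\<lambda>v. even (card v) \<and> j \<notin> v"])
    qed
  qed
  then obtain W where "\<forall>x\<in>Vn n. \<forall>y\<in>Vn n. K x = K y \<longleftrightarrow> W (vadd x y)"
    by blast
  then show ?thesis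
    using even_coloring_if_cosets[of n K W 4] all_colors_used[OF two[OF \<open>{} \<in> Vn n\<close>]]
    by blast
qed

end

theorem theorem5p3:
  fixes n :: nat and K :: "nat set \<Rightarrow> nat"
  assumes "n \<ge> 3"
    and "proper_coloring n 4 K"
  shows "(\<forall>i j. i < j \<and> j < n \<and>
            transition_edges n 4 K =
              {(x, y). x \<in> Vn n \<and> y \<in> Vn n \<and> vadd x y \<in> {fvec n i, fvec n j}}
          \<longrightarrow> color_classes n 4 K =
              {{x \<in> Vn n. (i \<in> x \<longleftrightarrow> a) \<and> (j \<in> x \<longleftrightarrow> b)} | a b. True})
       \<and> (\<forall>j. j < n \<and>
            transition_edges n 4 K =
              {(x, y). x \<in> Vn n \<and> y \<in> Vn n \<and> vadd x y \<in> {ones n, fvec n j}}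
          \<longrightarrow> even n \<and> color_classes n 4 K =
              {{v \<in> Vn n. wt v mod 2 = \<nu> \<and> (j \<in> v \<longleftrightarrow> \<mu>)} | \<nu> \<mu>. \<nu> < (2::nat)})
       \<and> (rb n 4 K = 2 / (real n + 1) \<longrightarrow> even_coloring n 4 K)"
proof -
  interpret four_coloring n K
    using assms by unfold_locales
  show ?thesis
    apply (rule conjI)
     apply (intro allI impI, elim conjE, rule coordinate_color_classes; assumption)
    apply (rule conjI)
     apply (intro allI impI, elim conjE, rule parity_color_classes; assumption)
    apply (intro impI, erule even_coloring_if_rb)
    done
qed

end
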